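(* Let $X$ and $\Lambda$ be nonempty sets, $f: X\to\mathbb{R}$, and $(f_\lambda)_{\lambda\in\Lambda}$ a family of real-valued functions on $X$ such that $(f_\lambda(x))_{\lambda\in\Lambda}\in\ell^\infty(\Lambda)$ for every $x\in X$ and the feasible set $X_0:=\{x\in X:\ \sup_{\lambda\in\Lambda}f_\lambda(x)\le0\}$ is nonempty. Assume $x^0\in X_0$ is an optimal solution, i.e. $f(x^0)=\inf_{x\in X_0}f(x)$, and that the Slater condition holds: there exists $x^1\in X$ with $\sup_{\lambda\in\Lambda}f_\lambda(x^1)<0$. Then there exists $\Phi_0\in\ell^\infty(\Lambda)^*_+$ such that $(x^0,\Phi_0)$ is a saddle point of the Lagrangian $\mathbf{L}$ if and only if the family $(f_\lambda)_{\lambda\in\Lambda}\cup(f-f(x^0))$ is infsup-convex on $X$.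
   Context: $\ell^\infty(\Lambda)$ is the Banach space of bounded real functions on $\Lambda$ (sup-norm), $\ell^\infty(\Lambda)^*_+$ the cone of positive continuous linear functionals on it ($\Phi(\varphi)\ge0$ whenever $\varphi\ge0$). The Lagrangian $\mathbf{L}: X\times\ell^\infty(\Lambda)^*_+\to\mathbb{R}$ is $\mathbf{L}(x,\Phi):=f(x)+\Phi((f_\lambda(x))_{\lambda\in\Lambda})$; $(x^0,\Phi_0)$ is a saddle point if $\mathbf{L}(x^0,\Phi)\le\mathbf{L}(x^0,\Phi_0)\le\mathbf{L}(x,\Phi_0)$ for all $(x,\Phi)\in X\times\ell^\infty(\Lambda)^*_+$. The family $(f_\lambda)_{\lambda\in\Lambda}\cup(f-f(x^0))$ is the family indexed by $\Lambda\cup\{\mu\}$ ($\mu\notin\Lambda$) whose $\mu$-th member is $f-f(x^0)$. With $\Delta_m:=\{\mathbf t\in\mathbb{R}^m: t_j\ge0,\sum t_j=1\}$, a family $(g_i)_{i\in I}$ of real functions on $X$ is infsup-convex on $X$ if for all $m\ge1$, $\mathbf{t}\in\Delta_m$, $x_1,\dots,x_m\in X$: $\inf_{x\in X}\sup_{i\in I}g_i(x)\le\sup_{i\in I}\sum_{j=1}^m t_j g_i(x_j)$. *)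

theory Defs
  imports "HOL-Analysis.Analysis"
begin

text \<open>The index set Lambda and the set X are modelled as (nonempty) types 'l and 'x.
  Elements of ell-infinity(Lambda) are the bounded functions 'l => real.\<close>

definition linf :: "('l \<Rightarrow> real) set" where
  "linf = {\<phi>. bdd_above (range (\<lambda>l. \<bar>\<phi> l\<bar>))}"

definition sup_norm :: "('l \<Rightarrow> real) \<Rightarrow> real" where
  "sup_norm \<phi> = (SUP l. \<bar>\<phi> l\<bar>)"

text \<open>Positive continuous linear functionals on ell-infinity(Lambda)
  (only their values on linf matter).\<close>

definition pos_dual :: "(('l \<Rightarrow> real) \<Rightarrow> real) set" where
  "pos_dual = {\<Phi>.
     (\<forall>\<phi>\<in>linf. \<forall>\<psi>\<in>linf. \<Phi> (\<lambda>l. \<phi> l + \<psi> l) = \<Phi> \<phi> + \<Phi> \<psi>) \<and>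
     (\<forall>\<phi>\<in>linf. \<forall>c::real. \<Phi> (\<lambda>l. c * \<phi> l) = c * \<Phi> \<phi>) \<and>
     (\<exists>C. \<forall>\<phi>\<in>linf. \<bar>\<Phi> \<phi>\<bar> \<le> C * sup_norm \<phi>) \<and>
     (\<forall>\<phi>\<in>linf. (\<forall>l. 0 \<le> \<phi> l) \<longrightarrow> 0 \<le> \<Phi> \<phi>)}"

definition lagrangian ::
  "('x \<Rightarrow> real) \<Rightarrow> ('l \<Rightarrow> 'x \<Rightarrow> real) \<Rightarrow> 'x \<Rightarrow> (('l \<Rightarrow> real) \<Rightarrow> real) \<Rightarrow> real" where
  "lagrangian f fl x \<Phi> = f x + \<Phi> (\<lambda>l. fl l x)"

definition saddle_point ::
  "('x \<Rightarrow> real) \<Rightarrow> ('l \<Rightarrow> 'x \<Rightarrow> real) \<Rightarrow> 'x \<Rightarrow> (('l \<Rightarrow> real) \<Rightarrow> real) \<Rightarrow> bool" where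
  "saddle_point f fl x0 \<Phi>0 \<longleftrightarrow>
     (\<forall>x. \<forall>\<Phi>\<in>pos_dual.
        lagrangian f fl x0 \<Phi> \<le> lagrangian f fl x0 \<Phi>0 \<and>
        lagrangian f fl x0 \<Phi>0 \<le> lagrangian f fl x \<Phi>0)"

definition infsup_convex :: "('i \<Rightarrow> 'x \<Rightarrow> real) \<Rightarrow> bool" where
  "infsup_convex g \<longleftrightarrow>
     (\<forall>m::nat. \<forall>t::nat \<Rightarrow> real. \<forall>xs::nat \<Rightarrow> 'x.
        m \<ge> 1 \<and> (\<forall>j<m. 0 \<le> t j) \<and> (\<Sum>j<m. t j) = 1 \<longrightarrow>
        (INF x. SUP i. ereal (g i x)) \<le> (SUP i. ereal (\<Sum>j<m. t j * g i (xs j))))"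

text \<open>The family (f_lambda) joined with f - f(x0), indexed by 'l option (None = mu).\<close>

definition augmented_family ::
  "('x \<Rightarrow> real) \<Rightarrow> ('l \<Rightarrow> 'x \<Rightarrow> real) \<Rightarrow> 'x \<Rightarrow> 'l option \<Rightarrow> 'x \<Rightarrow> real" where
  "augmented_family f fl x0 i x =
     (case i of None \<Rightarrow> f x - f x0 | Some l \<Rightarrow> fl l x)"

end

theory Submission
  imports Defs
begin

text \<open>Since \<open>x\<^sup>0\<close> is optimal and feasible, the inf-sup of the augmented family is \<open>0\<close>.
  Saddle points are exactly the Lagrange multipliers: positive functionals \<open>\<Phi>\<^sub>0\<close> with
  \<open>f(x\<^sup>0) \<le> f(x) + \<Phi>\<^sub>0((f\<^sub>\<lambda>(x))\<^sub>\<lambda>)\<close> for all \<open>x\<close>. Given one, averaging this inequality over a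
  convex combination shows that some member of the averaged family is nonnegative, which is
  infsup-convexity. Conversely, consider the convex cone of pairs \<open>(\<phi>, r)\<close> dominated by nonnegative
  combinations of the points \<open>(-(f\<^sub>\<lambda>(x))\<^sub>\<lambda>, f(x) - f(x\<^sup>0))\<close>. Infsup-convexity together with the Slater
  point keeps \<open>(0, -1)\<close> out of it. By Zorn's lemma it extends to a maximal cone avoiding \<open>(0, -1)\<close>;
  this is a half-space, whose lower boundary \<open>r = L \<phi>\<close> is a linear functional lying below the cone.
  Lying below the cone makes \<open>L\<close> positive, hence bounded, and a Lagrange multiplier.\<close>

lemma linf_iff: "\<phi> \<in> linf \<longleftrightarrow> (\<exists>B. \<forall>l. \<bar>\<phi> l\<bar> \<le> B)"
  unfolding linf_def bdd_above_def by auto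

lemma linf_add: "\<phi> \<in> linf \<Longrightarrow> \<psi> \<in> linf \<Longrightarrow> (\<lambda>l. \<phi> l + \<psi> l) \<in> linf"
proof -
  assume "\<phi> \<in> linf" "\<psi> \<in> linf"
  then obtain B C where "\<forall>l. \<bar>\<phi> l\<bar> \<le> B" "\<forall>l. \<bar>\<psi> l\<bar> \<le> C" by (auto simp: linf_iff)
  then have "\<forall>l. \<bar>\<phi> l + \<psi> l\<bar> \<le> B + C"
    by (meson abs_triangle_ineq add_mono order_trans)
  then show ?thesis by (auto simp: linf_iff)
qed

lemma linf_scale: "\<phi> \<in> linf \<Longrightarrow> (\<lambda>l. c * \<phi> l) \<in> linf"
proof -
  assume "\<phi> \<in> linf"
  then obtain B where "\<forall>l. \<bar>\<phi> l\<bar> \<le> B" by (auto simp: linf_iff)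
  then have "\<forall>l. \<bar>c * \<phi> l\<bar> \<le> \<bar>c\<bar> * B"
    by (simp add: abs_mult mult_left_mono)
  then show ?thesis by (auto simp: linf_iff)
qed

lemma linf_minus: "\<phi> \<in> linf \<Longrightarrow> (\<lambda>l. - \<phi> l) \<in> linf"
  using linf_scale[of \<phi> "-1"] by simp

lemma linf_const: "(\<lambda>l. c) \<in> linf"
  by (auto simp: linf_iff)

lemma linf_sum: "(\<And>j. g j \<in> linf) \<Longrightarrow> (\<lambda>l. \<Sum>j<(m::nat). t j * g j l) \<in> linf"
  by (induction m) (simp_all add: linf_const linf_add linf_scale)

lemma linf_bdd_above: "\<phi> \<in> linf \<Longrightarrow> bdd_above (range \<phi>)"
  by (auto simp: linf_iff bdd_above_def intro: abs_le_D1)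

lemma linf_le_SUP: "\<phi> \<in> linf \<Longrightarrow> \<phi> l \<le> (SUP l. \<phi> l)"
  by (rule cSUP_upper) (simp_all add: linf_bdd_above)

lemma abs_le_sup_norm: "\<phi> \<in> linf \<Longrightarrow> \<bar>\<phi> l\<bar> \<le> sup_norm \<phi>"
  unfolding sup_norm_def linf_def by (rule cSUP_upper) auto

definition conic :: "(('a \<Rightarrow> real) \<times> real) set \<Rightarrow> bool" where
  "conic D \<longleftrightarrow>
     (\<forall>\<phi> r \<psi> s. (\<phi>, r) \<in> D \<longrightarrow> (\<psi>, s) \<in> D \<longrightarrow> (\<lambda>l. \<phi> l + \<psi> l, r + s) \<in> D) \<and>
     (\<forall>\<phi> r c. (\<phi>, r) \<in> D \<longrightarrow> 0 < c \<longrightarrow> (\<lambda>l. c * \<phi> l, c * r) \<in> D)"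

lemma conic_add: "conic D \<Longrightarrow> (\<phi>, r) \<in> D \<Longrightarrow> (\<psi>, s) \<in> D \<Longrightarrow> (\<lambda>l. \<phi> l + \<psi> l, r + s) \<in> D"
  unfolding conic_def by blast

lemma conic_scale: "conic D \<Longrightarrow> (\<phi>, r) \<in> D \<Longrightarrow> 0 < c \<Longrightarrow> (\<lambda>l. c * \<phi> l, c * r) \<in> D"
  unfolding conic_def by blast

lemma conic_Union_chain:
  assumes "\<forall>D\<in>C. conic D" and "subset.chain UNIV C"
  shows "conic (\<Union>C)"
  unfolding conic_def
proof (intro conjI allI impI)
  fix \<phi> r \<psi> s assume "(\<phi>, r) \<in> \<Union>C" "(\<psi>, s) \<in> \<Union>C"
  then obtain D D' where "D \<in> C" "D' \<in> C" "(\<phi>, r) \<in> D" "(\<psi>, s) \<in> D'" by blast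
  moreover have "D \<subseteq> D' \<or> D' \<subseteq> D"
    using assms(2) \<open>D \<in> C\<close> \<open>D' \<in> C\<close> by (auto simp: subset_chain_def)
  ultimately show "(\<lambda>l. \<phi> l + \<psi> l, r + s) \<in> \<Union>C"
    using assms(1) by (metis UnionI conic_add subsetD)
next
  fix \<phi> r and c :: real assume "(\<phi>, r) \<in> \<Union>C" "0 < c"
  then obtain D where "D \<in> C" "(\<phi>, r) \<in> D" by blast
  then show "(\<lambda>l. c * \<phi> l, c * r) \<in> \<Union>C"
    using assms(1) \<open>0 < c\<close> conic_scale by blast
qed

lemma maximal_conic_exists:
  assumes "conic E" and "(\<lambda>_. 0, -1) \<notin> E"
  obtains M where "E \<subseteq> M" "conic M" "(\<lambda>_. 0, -1) \<notin> M"
    "\<And>X. E \<subseteq> X \<Longrightarrow> conic X \<Longrightarrow> (\<lambda>_. 0, -1) \<notin> X \<Longrightarrow> M \<subseteq> X \<Longrightarrow> X = M"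
proof -
  define A where "A = {D. E \<subseteq> D \<and> conic D \<and> (\<lambda>_. 0, -1) \<notin> D}"
  have "\<exists>M\<in>A. \<forall>X\<in>A. M \<subseteq> X \<longrightarrow> X = M"
  proof (rule subset_Zorn)
    fix C assume C: "subset.chain A C"
    show "\<exists>U\<in>A. \<forall>X\<in>C. X \<subseteq> U"
    proof (cases "C = {}")
      case True
      then show ?thesis using assms by (auto simp: A_def)
    next
      case False
      have "conic (\<Union>C)"
        using C by (intro conic_Union_chain) (auto simp: A_def subset_chain_def)
      then have "\<Union>C \<in> A" using C False by (auto simp: A_def subset_chain_def)
      then show ?thesis by blast
    qed
  qed
  then show ?thesis using that by (auto simp: A_def)
qed

definition cone_extend :: "(('a \<Rightarrow> real) \<times> real) set \<Rightarrow> ('a \<Rightarrow> real) \<Rightarrow> real \<Rightarrow> (('a \<Rightarrow> real) \<times> real) set"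
  where "cone_extend M \<eta> u = {(\<lambda>l. \<phi> l + s * \<eta> l, r + s * u) | \<phi> r s. (\<phi>, r) \<in> M \<and> 0 \<le> s}"

lemma cone_extendI: "(\<phi>, r) \<in> M \<Longrightarrow> 0 \<le> s \<Longrightarrow> (\<lambda>l. \<phi> l + s * \<eta> l, r + s * u) \<in> cone_extend M \<eta> u"
  unfolding cone_extend_def by blast

lemma subset_cone_extend: "M \<subseteq> cone_extend M \<eta> u"
  using cone_extendI[of _ _ M 0] by fastforce

lemma mem_cone_extend: "(\<lambda>_. 0, 0) \<in> M \<Longrightarrow> (\<eta>, u) \<in> cone_extend M \<eta> u"
  using cone_extendI[of _ _ M 1] by fastforce

lemma conic_cone_extend:
  assumes cM: "conic M"
  shows "conic (cone_extend M \<eta> u)"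
  unfolding conic_def
proof (intro conjI allI impI)
  fix \<phi>' r' \<psi>' s' assume "(\<phi>', r') \<in> cone_extend M \<eta> u" "(\<psi>', s') \<in> cone_extend M \<eta> u"
  then obtain \<phi>1 r1 a1 \<phi>2 r2 a2 where
    "(\<phi>1, r1) \<in> M" "0 \<le> a1" "\<phi>' = (\<lambda>l. \<phi>1 l + a1 * \<eta> l)" "r' = r1 + a1 * u"
    "(\<phi>2, r2) \<in> M" "0 \<le> a2" "\<psi>' = (\<lambda>l. \<phi>2 l + a2 * \<eta> l)" "s' = r2 + a2 * u"
    unfolding cone_extend_def by blast
  moreover have "(\<lambda>l. \<phi>1 l + \<phi>2 l, r1 + r2) \<in> M" using calculation cM conic_add by blast
  ultimately show "(\<lambda>l. \<phi>' l + \<psi>' l, r' + s') \<in> cone_extend M \<eta> u"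
    using cone_extendI[of "\<lambda>l. \<phi>1 l + \<phi>2 l" "r1 + r2" M "a1 + a2" \<eta> u]
    by (simp add: algebra_simps)
next
  fix \<phi>' r' and c :: real assume "(\<phi>', r') \<in> cone_extend M \<eta> u" "0 < c"
  then obtain \<phi>1 r1 a1 where
    "(\<phi>1, r1) \<in> M" "0 \<le> a1" "\<phi>' = (\<lambda>l. \<phi>1 l + a1 * \<eta> l)" "r' = r1 + a1 * u"
    unfolding cone_extend_def by blast
  moreover have "(\<lambda>l. c * \<phi>1 l, c * r1) \<in> M" using calculation cM \<open>0 < c\<close> conic_scale by blast
  ultimately show "(\<lambda>l. c * \<phi>' l, c * r') \<in> cone_extend M \<eta> u"
    using cone_extendI[of "\<lambda>l. c * \<phi>1 l" "c * r1" M "c * a1" \<eta> u] \<open>0 < c\<close>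
    by (simp add: algebra_simps)
qed

lemma maximal_conic_decompose:
  assumes cM: "conic M" and bad: "(\<lambda>_. 0, -1) \<notin> M" and zero: "(\<lambda>_. 0, 0) \<in> M"
    and max: "\<And>X. conic X \<Longrightarrow> (\<lambda>_. 0, -1) \<notin> X \<Longrightarrow> M \<subseteq> X \<Longrightarrow> X = M"
    and "(\<eta>, u) \<notin> M"
  obtains \<phi> r s where "(\<phi>, r) \<in> M" "0 < s" "\<And>l. \<phi> l + s * \<eta> l = 0" "r + s * u = -1"
proof -
  have "cone_extend M \<eta> u \<noteq> M" using mem_cone_extend[OF zero] assms(5) by auto
  then have "(\<lambda>_. 0, -1) \<in> cone_extend M \<eta> u"
    using max conic_cone_extend[OF cM] subset_cone_extend by blast
  then obtain \<phi> r s where \<phi>: "(\<phi>, r) \<in> M" "0 \<le> s"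
    and eq: "\<forall>l. \<phi> l + s * \<eta> l = 0" "r + s * u = -1"
    unfolding cone_extend_def by (auto simp: fun_eq_iff)
  have "s \<noteq> 0"
  proof
    assume "s = 0"
    then have "\<phi> = (\<lambda>_. 0)" "r = -1" using eq by auto
    then show False using \<phi> bad by simp
  qed
  with \<phi> have "0 < s" by simp
  then show ?thesis using that[OF \<phi>(1)] eq by blast
qed

text \<open>Were neither the pair nor its negative in the cone, combining the two resulting
  representations of (0,-1) would put a positive multiple of (0,-1) into it.\<close>

lemma maximal_conic_total:
  assumes cM: "conic M" and bad: "(\<lambda>_. 0, -1) \<notin> M" and zero: "(\<lambda>_. 0, 0) \<in> M"
    and max: "\<And>X. conic X \<Longrightarrow> (\<lambda>_. 0, -1) \<notin> X \<Longrightarrow> M \<subseteq> X \<Longrightarrow> X = M"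
  shows "(\<psi>, t) \<in> M \<or> (\<lambda>l. - \<psi> l, - t) \<in> M"
proof (rule ccontr)
  assume "\<not> ?thesis"
  then have "(\<psi>, t) \<notin> M" "(\<lambda>l. - \<psi> l, - t) \<notin> M" by auto
  obtain \<phi>1 r1 s1 where
    d1: "(\<phi>1, r1) \<in> M" "0 < s1" "\<And>l. \<phi>1 l + s1 * \<psi> l = 0" "r1 + s1 * t = -1"
    using maximal_conic_decompose[OF assms \<open>(\<psi>, t) \<notin> M\<close>] by blast
  obtain \<phi>2 r2 s2 where
    d2: "(\<phi>2, r2) \<in> M" "0 < s2" "\<And>l. \<phi>2 l + s2 * - \<psi> l = 0" "r2 + s2 * - t = -1"
    using maximal_conic_decompose[OF assms \<open>(\<lambda>l. - \<psi> l, - t) \<notin> M\<close>] by blast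
  have "(\<lambda>l. s2 * \<phi>1 l + s1 * \<phi>2 l, s2 * r1 + s1 * r2) \<in> M"
    using d1 d2 by (intro conic_add[OF cM] conic_scale[OF cM])
  moreover have "(\<lambda>l. s2 * \<phi>1 l + s1 * \<phi>2 l) = (\<lambda>_. 0)" "s2 * r1 + s1 * r2 = - (s1 + s2)"
  proof -
    have "s2 * \<phi>1 l + s1 * \<phi>2 l = s2 * (\<phi>1 l + s1 * \<psi> l) + s1 * (\<phi>2 l + s2 * - \<psi> l)" for l
      by (simp add: algebra_simps)
    then show "(\<lambda>l. s2 * \<phi>1 l + s1 * \<phi>2 l) = (\<lambda>_. 0)" using d1 d2 by auto
    have "s2 * r1 + s1 * r2 = s2 * (r1 + s1 * t) + s1 * (r2 + s2 * - t)" by (simp add: algebra_simps)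
    then show "s2 * r1 + s1 * r2 = - (s1 + s2)" using d1 d2 by simp
  qed
  ultimately have scaled: "(\<lambda>l. (1 / (s1 + s2)) * 0, (1 / (s1 + s2)) * - (s1 + s2)) \<in> M"
    using d1 d2 by (intro conic_scale[OF cM]) auto
  have "(\<lambda>l. (1 / (s1 + s2)) * 0, (1 / (s1 + s2)) * - (s1 + s2)) = (\<lambda>_. 0, -1)"
    using d1(2) d2(2) by (simp add: field_simps)
  with scaled bad show False by simp
qed

locale conic_half_space =
  fixes V :: "('a \<Rightarrow> real) set" and M :: "(('a \<Rightarrow> real) \<times> real) set"
  assumes V_add: "\<phi> \<in> V \<Longrightarrow> \<psi> \<in> V \<Longrightarrow> (\<lambda>l. \<phi> l + \<psi> l) \<in> V"
    and V_scale: "\<phi> \<in> V \<Longrightarrow> (\<lambda>l. c * \<phi> l) \<in> V"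
    and conic: "conic M"
    and avoids: "(\<lambda>_. 0, -1) \<notin> M"
    and total: "(\<phi>, r) \<in> M \<or> (\<lambda>l. - \<phi> l, - r) \<in> M"
    and finite_level: "\<phi> \<in> V \<Longrightarrow> \<exists>r. (\<phi>, r) \<in> M"
begin

lemma V_minus: "\<phi> \<in> V \<Longrightarrow> (\<lambda>l. - \<phi> l) \<in> V"
  using V_scale[of \<phi> "-1"] by simp

lemma nonneg_if_zero_mem: "(\<lambda>_. 0, r) \<in> M \<Longrightarrow> 0 \<le> r"
  using conic_scale[OF conic, of "\<lambda>_. 0" r "- 1 / r"] avoids
  by (cases "r < 0") auto

lemma zero_mem: "0 \<le> r \<Longrightarrow> (\<lambda>_. 0, r) \<in> M"
  using total[of "\<lambda>_. 0" r] nonneg_if_zero_mem[of "- r"] by force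

definition level :: "('a \<Rightarrow> real) \<Rightarrow> real" where
  "level \<phi> = Inf {r. (\<phi>, r) \<in> M}"

lemma bdd_below_level_set:
  assumes "\<phi> \<in> V"
  shows "bdd_below {r. (\<phi>, r) \<in> M}"
proof -
  obtain s where s: "(\<lambda>l. - \<phi> l, s) \<in> M"
    using finite_level V_minus assms by blast
  have "- s \<le> r" if "(\<phi>, r) \<in> M" for r
    using conic_add[OF conic that s] nonneg_if_zero_mem[of "r + s"] by simp
  then show ?thesis unfolding bdd_below_def by blast
qed

lemma level_le: "(\<phi>, r) \<in> M \<Longrightarrow> \<phi> \<in> V \<Longrightarrow> level \<phi> \<le> r"
  unfolding level_def by (rule cInf_lower) (auto intro: bdd_below_level_set)

lemma mem_if_level_less:
  assumes "\<phi> \<in> V" "level \<phi> < r"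
  shows "(\<phi>, r) \<in> M"
proof -
  obtain r' where "(\<phi>, r') \<in> M" "r' < r"
    using assms finite_level bdd_below_level_set unfolding level_def
    by (auto simp: cInf_less_iff)
  from conic_add[OF conic this(1) zero_mem[of "r - r'"]] this(2) show ?thesis by simp
qed

lemma level_le_approx:
  assumes "\<phi> \<in> V" "\<And>e. 0 < e \<Longrightarrow> (\<phi>, t + e) \<in> M"
  shows "level \<phi> \<le> t"
proof (rule field_le_epsilon)
  fix e :: real assume "0 < e"
  from level_le[OF assms(2)[OF this] assms(1)] show "level \<phi> \<le> t + e" .
qed

lemma level_minus:
  assumes \<phi>: "\<phi> \<in> V"
  shows "level (\<lambda>l. - \<phi> l) = - level \<phi>"
proof (rule antisym)
  show "level (\<lambda>l. - \<phi> l) \<le> - level \<phi>"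
  proof (rule field_le_epsilon)
    fix e :: real assume "0 < e"
    then have "(\<phi>, level \<phi> - e) \<notin> M" using level_le[OF _ \<phi>, of "level \<phi> - e"] by auto
    then have "(\<lambda>l. - \<phi> l, - (level \<phi> - e)) \<in> M" using total by blast
    from level_le[OF this V_minus[OF \<phi>]]
    show "level (\<lambda>l. - \<phi> l) \<le> - level \<phi> + e" by simp
  qed
  show "- level \<phi> \<le> level (\<lambda>l. - \<phi> l)"
  proof (rule field_le_epsilon)
    fix e :: real assume "0 < e"
    then have "(\<phi>, level \<phi> + e / 2) \<in> M" "(\<lambda>l. - \<phi> l, level (\<lambda>l. - \<phi> l) + e / 2) \<in> M"
      using \<phi> V_minus mem_if_level_less by auto
    from conic_add[OF conic this] have "0 \<le> level \<phi> + e / 2 + (level (\<lambda>l. - \<phi> l) + e / 2)"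
      using nonneg_if_zero_mem by simp
    then show "- level \<phi> \<le> level (\<lambda>l. - \<phi> l) + e" by simp
  qed
qed

lemma level_add:
  assumes \<phi>: "\<phi> \<in> V" and \<psi>: "\<psi> \<in> V"
  shows "level (\<lambda>l. \<phi> l + \<psi> l) = level \<phi> + level \<psi>"
proof -
  have subadditive: "level (\<lambda>l. \<phi> l + \<psi> l) \<le> level \<phi> + level \<psi>"
    if \<phi>: "\<phi> \<in> V" and \<psi>: "\<psi> \<in> V" for \<phi> \<psi>
  proof (rule level_le_approx)
    fix e :: real assume "0 < e"
    then have "(\<phi>, level \<phi> + e / 2) \<in> M" "(\<psi>, level \<psi> + e / 2) \<in> M"
      using \<phi> \<psi> mem_if_level_less by auto
    from conic_add[OF conic this]
    show "(\<lambda>l. \<phi> l + \<psi> l, level \<phi> + level \<psi> + e) \<in> M" by (simp add: algebra_simps)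
  qed (use \<phi> \<psi> V_add in auto)
  have "- level (\<lambda>l. \<phi> l + \<psi> l) = level (\<lambda>l. - \<phi> l + - \<psi> l)"
    using level_minus[OF V_add[OF \<phi> \<psi>]] by simp
  also have "\<dots> \<le> - level \<phi> - level \<psi>"
    using subadditive[OF V_minus[OF \<phi>] V_minus[OF \<psi>]] level_minus \<phi> \<psi> by simp
  finally show ?thesis using subadditive[OF \<phi> \<psi>] by linarith
qed

lemma level_scale_pos:
  assumes \<phi>: "\<phi> \<in> V" and "0 < c"
  shows "level (\<lambda>l. c * \<phi> l) = c * level \<phi>"
proof -
  have le: "level (\<lambda>l. c * \<phi> l) \<le> c * level \<phi>" if \<phi>: "\<phi> \<in> V" and "0 < c" for \<phi> c
  proof (rule level_le_approx)
    fix e :: real assume "0 < e"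
    then have "(\<phi>, level \<phi> + e / c) \<in> M" using \<phi> \<open>0 < c\<close> mem_if_level_less by auto
    from conic_scale[OF conic this \<open>0 < c\<close>]
    show "(\<lambda>l. c * \<phi> l, c * level \<phi> + e) \<in> M" using \<open>0 < c\<close> by (simp add: algebra_simps)
  qed (use \<phi> V_scale in auto)
  have "level \<phi> = level (\<lambda>l. (1 / c) * (c * \<phi> l))" using \<open>0 < c\<close> by simp
  also have "\<dots> \<le> (1 / c) * level (\<lambda>l. c * \<phi> l)"
    by (rule le) (use V_scale[OF \<phi>] \<open>0 < c\<close> in auto)
  finally show ?thesis using le[OF \<phi> \<open>0 < c\<close>] \<open>0 < c\<close> by (simp add: field_simps)
qed

lemma level_scale:
  assumes \<phi>: "\<phi> \<in> V"
  shows "level (\<lambda>l. c * \<phi> l) = c * level \<phi>"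
proof (cases c "0 :: real" rule: linorder_cases)
  case less
  then have "level (\<lambda>l. c * \<phi> l) = - level (\<lambda>l. (- c) * \<phi> l)"
    using level_minus[OF V_scale[OF \<phi>, of "- c"]] by simp
  then show ?thesis using level_scale_pos[OF \<phi>, of "- c"] less by simp
next
  case equal
  then show ?thesis using level_minus[OF V_scale[OF \<phi>, of 0]] by simp
next
  case greater
  then show ?thesis using level_scale_pos[OF \<phi>] by simp
qed

end

lemma linear_functional_below_conic:
  fixes E :: "(('a \<Rightarrow> real) \<times> real) set"
  assumes V_add: "\<And>\<phi> \<psi>. \<phi> \<in> V \<Longrightarrow> \<psi> \<in> V \<Longrightarrow> (\<lambda>l. \<phi> l + \<psi> l) \<in> V"
    and V_scale: "\<And>\<phi> c. \<phi> \<in> V \<Longrightarrow> (\<lambda>l. c * \<phi> l) \<in> V"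
    and "conic E" and "(\<lambda>_. 0, -1) \<notin> E" and "(\<lambda>_. 0, 0) \<in> E"
    and finite: "\<And>\<phi>. \<phi> \<in> V \<Longrightarrow> \<exists>r. (\<phi>, r) \<in> E"
  obtains L where "\<And>\<phi> \<psi>. \<phi> \<in> V \<Longrightarrow> \<psi> \<in> V \<Longrightarrow> L (\<lambda>l. \<phi> l + \<psi> l) = L \<phi> + L \<psi>"
    and "\<And>\<phi> c. \<phi> \<in> V \<Longrightarrow> L (\<lambda>l. c * \<phi> l) = c * L \<phi>"
    and "\<And>\<phi> r. (\<phi>, r) \<in> E \<Longrightarrow> \<phi> \<in> V \<Longrightarrow> L \<phi> \<le> r"
proof -
  obtain M where EM: "E \<subseteq> M" and "conic M" "(\<lambda>_. 0, -1) \<notin> M"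
    and max: "\<And>X. E \<subseteq> X \<Longrightarrow> conic X \<Longrightarrow> (\<lambda>_. 0, -1) \<notin> X \<Longrightarrow> M \<subseteq> X \<Longrightarrow> X = M"
    using maximal_conic_exists assms(3,4) by blast
  have zero: "(\<lambda>_. 0, 0) \<in> M" using EM assms(5) by blast
  have max': "X = M" if "conic X" "(\<lambda>_. 0, -1) \<notin> X" "M \<subseteq> X" for X
    using max EM that by blast
  interpret conic_half_space V M
  proof
    show "(\<phi>, r) \<in> M \<or> (\<lambda>l. - \<phi> l, - r) \<in> M" for \<phi> r
      using maximal_conic_total[OF \<open>conic M\<close> \<open>(\<lambda>_. 0, -1) \<notin> M\<close> zero max'] .
    show "\<exists>r. (\<phi>, r) \<in> M" if "\<phi> \<in> V" for \<phi>
      using finite[OF that] EM by blast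
  qed (fact V_add V_scale \<open>conic M\<close> \<open>(\<lambda>_. 0, -1) \<notin> M\<close>)+
  show ?thesis
  proof (rule that)
    show "level (\<lambda>l. \<phi> l + \<psi> l) = level \<phi> + level \<psi>" if "\<phi> \<in> V" "\<psi> \<in> V" for \<phi> \<psi>
      using level_add that .
    show "level (\<lambda>l. c * \<phi> l) = c * level \<phi>" if "\<phi> \<in> V" for \<phi> c
      using level_scale that .
    show "level \<phi> \<le> r" if "(\<phi>, r) \<in> E" "\<phi> \<in> V" for \<phi> r
      using level_le EM that by blast
  qed
qed

lemma pos_dual_add: "\<Phi> \<in> pos_dual \<Longrightarrow> \<phi> \<in> linf \<Longrightarrow> \<psi> \<in> linf \<Longrightarrow> \<Phi> (\<lambda>l. \<phi> l + \<psi> l) = \<Phi> \<phi> + \<Phi> \<psi>"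
  by (simp add: pos_dual_def)

lemma pos_dual_scale: "\<Phi> \<in> pos_dual \<Longrightarrow> \<phi> \<in> linf \<Longrightarrow> \<Phi> (\<lambda>l. c * \<phi> l) = c * \<Phi> \<phi>"
  by (simp add: pos_dual_def)

lemma pos_dual_nonneg: "\<Phi> \<in> pos_dual \<Longrightarrow> \<phi> \<in> linf \<Longrightarrow> (\<And>l. 0 \<le> \<phi> l) \<Longrightarrow> 0 \<le> \<Phi> \<phi>"
  by (simp add: pos_dual_def)

lemma pos_dual_nonpos:
  assumes "\<Phi> \<in> pos_dual" "\<phi> \<in> linf" "\<And>l. \<phi> l \<le> 0"
  shows "\<Phi> \<phi> \<le> 0"
  using pos_dual_nonneg[OF assms(1) linf_scale[OF assms(2), of "-1"]]
    pos_dual_scale[OF assms(1,2), of "-1"] assms(3)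
  by simp

lemma pos_dual_sum:
  fixes m :: nat
  assumes "\<Phi> \<in> pos_dual" "\<And>j. g j \<in> linf"
  shows "\<Phi> (\<lambda>l. \<Sum>j<m. t j * g j l) = (\<Sum>j<m. t j * \<Phi> (g j))"
proof (induction m)
  case 0
  show ?case using pos_dual_scale[OF assms(1) linf_const, of 0 0] by simp
next
  case (Suc m)
  have "\<Phi> (\<lambda>l. (\<Sum>j<m. t j * g j l) + t m * g m l)
      = \<Phi> (\<lambda>l. \<Sum>j<m. t j * g j l) + t m * \<Phi> (g m)"
    using pos_dual_add[OF assms(1) linf_sum[OF assms(2)] linf_scale[OF assms(2)]]
      pos_dual_scale[OF assms(1,2)] by simp
  then show ?case using Suc by simp
qed

lemma zero_in_pos_dual: "(\<lambda>_. 0) \<in> pos_dual"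
  by (auto simp: pos_dual_def intro: exI[of _ 0])

text \<open>Positivity alone already forces boundedness: \<open>- sup_norm \<phi> \<le> \<phi> \<le> sup_norm \<phi>\<close>
  and monotonicity give \<open>\<bar>L \<phi>\<bar> \<le> L 1 * sup_norm \<phi>\<close>.\<close>

lemma pos_dual_if_positive_linear:
  assumes add: "\<And>\<phi> \<psi>. \<phi> \<in> linf \<Longrightarrow> \<psi> \<in> linf \<Longrightarrow> L (\<lambda>l. \<phi> l + \<psi> l) = L \<phi> + L \<psi>"
    and scale: "\<And>\<phi> c. \<phi> \<in> linf \<Longrightarrow> L (\<lambda>l. c * \<phi> l) = c * L \<phi>"
    and pos: "\<And>\<phi>. \<phi> \<in> linf \<Longrightarrow> (\<And>l. 0 \<le> \<phi> l) \<Longrightarrow> 0 \<le> L \<phi>"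
  shows "L \<in> pos_dual"
proof -
  have minus: "L (\<lambda>l. - \<phi> l) = - L \<phi>" if "\<phi> \<in> linf" for \<phi>
    using scale[OF that, of "-1"] by simp
  have mono: "L \<phi> \<le> L \<psi>" if "\<phi> \<in> linf" "\<psi> \<in> linf" "\<And>l. \<phi> l \<le> \<psi> l" for \<phi> \<psi>
  proof -
    have "0 \<le> L (\<lambda>l. \<psi> l + - \<phi> l)"
      using that by (intro pos linf_add linf_minus) auto
    then show ?thesis using add[OF that(2) linf_minus[OF that(1)]] minus[OF that(1)] by simp
  qed
  have "\<bar>L \<phi>\<bar> \<le> L (\<lambda>_. 1) * sup_norm \<phi>" if "\<phi> \<in> linf" for \<phi>
  proof -
    have "L \<phi> \<le> L (\<lambda>_. sup_norm \<phi>)" "L (\<lambda>l. - \<phi> l) \<le> L (\<lambda>_. sup_norm \<phi>)"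
      using abs_le_sup_norm[OF that] that
      by (auto intro!: mono linf_minus linf_const simp: abs_le_iff)
    moreover have "L (\<lambda>_. sup_norm \<phi>) = L (\<lambda>_. 1) * sup_norm \<phi>"
      using scale[OF linf_const[of 1], of "sup_norm \<phi>"] by simp
    ultimately show ?thesis using minus[OF that] by linarith
  qed
  then have "\<exists>C. \<forall>\<phi>\<in>linf. \<bar>L \<phi>\<bar> \<le> C * sup_norm \<phi>" by blast
  then show ?thesis
    unfolding pos_dual_def using add scale pos by auto
qed

lemma augmented_family_simps [simp]:
  "augmented_family f fl x0 None x = f x - f x0"
  "augmented_family f fl x0 (Some l) x = fl l x"
  by (simp_all add: augmented_family_def)

lemma INF_SUP_augmented_family_nonneg:
  assumes bounded: "\<And>x. (\<lambda>l. fl l x) \<in> linf"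
    and optimal: "\<And>x. (SUP l. fl l x) \<le> 0 \<Longrightarrow> f x0 \<le> f x"
  shows "0 \<le> (INF x. SUP i. ereal (augmented_family f fl x0 i x))"
proof (rule INF_greatest)
  fix x
  obtain i where "0 \<le> augmented_family f fl x0 i x"
  proof (cases "(SUP l. fl l x) \<le> 0")
    case True
    then show ?thesis using that[of None] optimal by simp
  next
    case False
    then obtain l where "0 < fl l x"
      using less_cSUP_iff[of UNIV "\<lambda>l. fl l x" 0] linf_bdd_above[OF bounded] by auto
    then show ?thesis using that[of "Some l"] by simp
  qed
  then show "0 \<le> (SUP i. ereal (augmented_family f fl x0 i x))"
    by (meson SUP_upper2 UNIV_I ereal_less_eq(5))
qed

lemma saddle_point_iff:
  assumes "\<Phi>0 \<in> pos_dual" and bounded: "\<And>x. (\<lambda>l. fl l x) \<in> linf"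
    and feasible: "\<And>l. fl l x0 \<le> 0"
  shows "saddle_point f fl x0 \<Phi>0 \<longleftrightarrow> (\<forall>x. f x0 \<le> f x + \<Phi>0 (\<lambda>l. fl l x))"
proof -
  have nonpos: "\<Phi> (\<lambda>l. fl l x0) \<le> 0" if "\<Phi> \<in> pos_dual" for \<Phi>
    using pos_dual_nonpos[OF that bounded feasible] .
  show ?thesis
  proof
    assume "saddle_point f fl x0 \<Phi>0"
    then have "lagrangian f fl x0 (\<lambda>_. 0) \<le> lagrangian f fl x0 \<Phi>0"
      and "lagrangian f fl x0 \<Phi>0 \<le> lagrangian f fl x \<Phi>0" for x
      using zero_in_pos_dual unfolding saddle_point_def by blast+
    then show "\<forall>x. f x0 \<le> f x + \<Phi>0 (\<lambda>l. fl l x)"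
      unfolding lagrangian_def by (smt (verit))
  next
    assume lower: "\<forall>x. f x0 \<le> f x + \<Phi>0 (\<lambda>l. fl l x)"
    have "\<Phi>0 (\<lambda>l. fl l x0) = 0" using lower[rule_format, of x0] nonpos[OF assms(1)] by linarith
    then show "saddle_point f fl x0 \<Phi>0"
      unfolding saddle_point_def lagrangian_def using nonpos lower by simp
  qed
qed

lemma infsup_convex_if_multiplier:
  assumes "\<Phi> \<in> pos_dual" and bounded: "\<And>x. (\<lambda>l. fl l x) \<in> linf"
    and feasible: "\<And>l. fl l x0 \<le> 0"
    and lower: "\<And>x. f x0 \<le> f x + \<Phi> (\<lambda>l. fl l x)"
  shows "infsup_convex (augmented_family f fl x0)"
  unfolding infsup_convex_def
proof (intro allI impI)
  fix m :: nat and t :: "nat \<Rightarrow> real" and xs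
  assume "1 \<le> m \<and> (\<forall>j<m. 0 \<le> t j) \<and> (\<Sum>j<m. t j) = 1"
  then have t: "\<And>j. j < m \<Longrightarrow> 0 \<le> t j" "(\<Sum>j<m. t j) = 1" by auto
  let ?g = "augmented_family f fl x0"
  have "(INF x. SUP i. ereal (?g i x)) \<le> (SUP i. ereal (?g i x0))"
    by (rule INF_lower) simp
  also have "\<dots> \<le> 0"
    by (rule SUP_least) (simp add: augmented_family_def feasible split: option.split)
  also obtain i where "0 \<le> (\<Sum>j<m. t j * ?g i (xs j))"
  proof (cases "\<exists>l. 0 \<le> (\<Sum>j<m. t j * fl l (xs j))")
    case True
    then show ?thesis using that[of "Some _"] by auto
  next
    case False
    define \<psi> where "\<psi> l = (\<Sum>j<m. t j * fl l (xs j))" for l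
    have "\<Phi> \<psi> \<le> 0"
      using False unfolding \<psi>_def
      by (intro pos_dual_nonpos[OF assms(1)] linf_sum bounded) (auto simp: not_le less_imp_le)
    have "f x0 = (\<Sum>j<m. t j * f x0)" using t by (simp add: sum_distrib_right[symmetric])
    also have "\<dots> \<le> (\<Sum>j<m. t j * (f (xs j) + \<Phi> (\<lambda>l. fl l (xs j))))"
      using t lower by (intro sum_mono mult_left_mono) auto
    also have "\<dots> = (\<Sum>j<m. t j * f (xs j)) + \<Phi> \<psi>"
      unfolding \<psi>_def pos_dual_sum[OF assms(1) bounded]
      by (simp add: distrib_left sum.distrib)
    finally have "f x0 \<le> (\<Sum>j<m. t j * f (xs j))" using \<open>\<Phi> \<psi> \<le> 0\<close> by linarith
    then show ?thesis
      using that[of None] t by (simp add: right_diff_distrib sum_subtractf sum_distrib_right[symmetric])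
  qed
  then have "0 \<le> (SUP i. ereal (\<Sum>j<m. t j * ?g i (xs j)))"
    by (meson SUP_upper2 UNIV_I ereal_less_eq(5))
  finally show "(INF x. SUP i. ereal (?g i x)) \<le> (SUP i. ereal (\<Sum>j<m. t j * ?g i (xs j)))" .
qed

lemma infsup_convex_weighted:
  assumes "infsup_convex g" and nonneg: "\<forall>p\<in>set ps. 0 \<le> fst p" and N: "0 < (\<Sum>p\<leftarrow>ps. fst p)"
  shows "(INF x. SUP i. ereal (g i x))
    \<le> (SUP i. ereal ((\<Sum>p\<leftarrow>ps. fst p * g i (snd p)) / (\<Sum>p\<leftarrow>ps. fst p)))"
proof -
  define N where "N = (\<Sum>p\<leftarrow>ps. fst p)"
  define t where "t j = fst (ps ! j) / N" for j
  have as_sum: "(\<Sum>j<length ps. t j * h (snd (ps ! j))) = (\<Sum>p\<leftarrow>ps. fst p * h (snd p)) / N" for h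
    unfolding t_def by (simp add: sum_list_sum_nth atLeast0LessThan sum_divide_distrib)
  have "1 \<le> length ps" using N by (cases ps) auto
  moreover have "\<forall>j<length ps. 0 \<le> t j"
    using nonneg N unfolding t_def N_def by (auto intro: divide_nonneg_pos)
  moreover have "(\<Sum>j<length ps. t j) = 1"
    using as_sum[of "\<lambda>_. 1"] N unfolding N_def by simp
  ultimately have "(INF x. SUP i. ereal (g i x))
      \<le> (SUP i. ereal (\<Sum>j<length ps. t j * g i (snd (ps ! j))))"
    using assms(1)[unfolded infsup_convex_def, rule_format, of "length ps" t "\<lambda>j. snd (ps ! j)"]
    by blast
  then show ?thesis unfolding as_sum N_def .
qed

definition dominated_cone :: "('l \<Rightarrow> 'x \<Rightarrow> real) \<Rightarrow> ('x \<Rightarrow> real) \<Rightarrow> (('l \<Rightarrow> real) \<times> real) set" where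
  "dominated_cone fl h = {(\<phi>, r). \<exists>ps. (\<forall>p\<in>set ps. 0 \<le> fst p)
      \<and> (\<forall>l. \<phi> l \<le> - (\<Sum>p\<leftarrow>ps. fst p * fl l (snd p))) \<and> (\<Sum>p\<leftarrow>ps. fst p * h (snd p)) \<le> r}"

text \<open>Elements of the cone are listed as weight/point pairs; a list rather than an indexed family
  makes the sum of two elements a concatenation.\<close>

lemma dominated_coneI:
  "\<forall>p\<in>set ps. 0 \<le> fst p \<Longrightarrow> (\<And>l. \<phi> l \<le> - (\<Sum>p\<leftarrow>ps. fst p * fl l (snd p)))
    \<Longrightarrow> (\<Sum>p\<leftarrow>ps. fst p * h (snd p)) \<le> r \<Longrightarrow> (\<phi>, r) \<in> dominated_cone fl h"
  unfolding dominated_cone_def by blast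

lemma sum_list_scale_weights:
  "(\<Sum>p\<leftarrow>map (\<lambda>p. (c * fst p, snd p)) ps. fst p * g (snd p)) = c * (\<Sum>p\<leftarrow>ps. fst p * (g (snd p) :: real))"
  by (induction ps) (auto simp: algebra_simps)

lemma conic_dominated_cone: "conic (dominated_cone fl h)"
  unfolding conic_def
proof (intro conjI allI impI)
  fix \<phi> r \<psi> s
  assume "(\<phi>, r) \<in> dominated_cone fl h" "(\<psi>, s) \<in> dominated_cone fl h"
  then obtain ps qs where
    "\<forall>p\<in>set ps. 0 \<le> fst p" "\<forall>l. \<phi> l \<le> - (\<Sum>p\<leftarrow>ps. fst p * fl l (snd p))"
    "(\<Sum>p\<leftarrow>ps. fst p * h (snd p)) \<le> r"
    "\<forall>p\<in>set qs. 0 \<le> fst p" "\<forall>l. \<psi> l \<le> - (\<Sum>p\<leftarrow>qs. fst p * fl l (snd p))"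
    "(\<Sum>p\<leftarrow>qs. fst p * h (snd p)) \<le> s"
    unfolding dominated_cone_def by blast
  moreover have "\<phi> l + \<psi> l
      \<le> - (\<Sum>p\<leftarrow>ps. fst p * fl l (snd p)) + - (\<Sum>p\<leftarrow>qs. fst p * fl l (snd p))" for l
    using calculation by (intro add_mono) auto
  ultimately show "(\<lambda>l. \<phi> l + \<psi> l, r + s) \<in> dominated_cone fl h"
    by (intro dominated_coneI[where ps = "ps @ qs"]) auto
next
  fix \<phi> r and c :: real
  assume "(\<phi>, r) \<in> dominated_cone fl h" "0 < c"
  then obtain ps where ps: "\<forall>p\<in>set ps. 0 \<le> fst p"
    and \<phi>: "\<forall>l. \<phi> l \<le> - (\<Sum>p\<leftarrow>ps. fst p * fl l (snd p))"
    and r: "(\<Sum>p\<leftarrow>ps. fst p * h (snd p)) \<le> r"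
    unfolding dominated_cone_def by blast
  let ?cps = "map (\<lambda>p. (c * fst p, snd p)) ps"
  have "c * \<phi> l \<le> - (\<Sum>p\<leftarrow>?cps. fst p * fl l (snd p))" for l
  proof -
    have "c * \<phi> l \<le> c * - (\<Sum>p\<leftarrow>ps. fst p * fl l (snd p))"
      using \<phi> \<open>0 < c\<close> by (intro mult_left_mono) auto
    then show ?thesis unfolding sum_list_scale_weights by simp
  qed
  moreover have "(\<Sum>p\<leftarrow>?cps. fst p * h (snd p)) \<le> c * r"
    unfolding sum_list_scale_weights using r \<open>0 < c\<close> by (simp add: mult_left_mono)
  moreover have "\<forall>p\<in>set ?cps. 0 \<le> fst p" using ps \<open>0 < c\<close> by auto
  ultimately show "(\<lambda>l. c * \<phi> l, c * r) \<in> dominated_cone fl h"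
    by (intro dominated_coneI)
qed

lemma ex_dominated_cone_if_slater:
  assumes "\<phi> \<in> linf" and x1: "\<And>l. fl l x1 \<le> s" and "s < 0"
  shows "\<exists>r. (\<phi>, r) \<in> dominated_cone fl h"
proof -
  obtain B where B: "\<And>l. \<bar>\<phi> l\<bar> \<le> B" using assms(1) unfolding linf_iff by blast
  define a where "a = B / (- s)"
  have "0 \<le> B" using B[of undefined] abs_ge_zero order_trans by blast
  then have "0 \<le> a" unfolding a_def using \<open>s < 0\<close> by (intro divide_nonneg_pos) auto
  have "\<phi> l \<le> - (a * fl l x1)" for l
  proof -
    have "\<phi> l \<le> a * (- s)" using B[of l] \<open>s < 0\<close> by (simp add: a_def abs_le_iff)
    also have "\<dots> \<le> a * (- fl l x1)" using \<open>0 \<le> a\<close> x1[of l] by (simp add: mult_left_mono)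
    finally show ?thesis by simp
  qed
  then have "(\<phi>, a * h x1) \<in> dominated_cone fl h"
    using \<open>0 \<le> a\<close> by (intro dominated_coneI[where ps = "[(a, x1)]"]) auto
  then show ?thesis by blast
qed

text \<open>If the cone contained (0,-1), a convex combination would make the objective part
  negative and the constraints nonpositive; adding a small multiple of the Slater point makes
  every member of the augmented family uniformly negative, against infsup-convexity.\<close>

lemma dominated_cone_avoids:
  assumes convex: "infsup_convex (augmented_family f fl x0)"
    and nonneg: "0 \<le> (INF x. SUP i. ereal (augmented_family f fl x0 i x))"
    and slater: "\<And>l. fl l x1 \<le> s" "s < 0"
  shows "(\<lambda>_. 0, -1) \<notin> dominated_cone fl (\<lambda>x. f x - f x0)"
proof
  let ?g = "augmented_family f fl x0"
  assume "(\<lambda>_. 0, -1) \<in> dominated_cone fl (\<lambda>x. f x - f x0)"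
  then obtain ps where ps: "\<forall>p\<in>set ps. 0 \<le> fst p"
    and constraints: "\<And>l. (\<Sum>p\<leftarrow>ps. fst p * fl l (snd p)) \<le> 0"
    and objective: "(\<Sum>p\<leftarrow>ps. fst p * (f (snd p) - f x0)) \<le> -1"
    unfolding dominated_cone_def by auto
  define K where "K = \<bar>f x1 - f x0\<bar> + 1"
  define e where "e = 1 / (2 * K)"
  define qs where "qs = (e, x1) # ps"
  define N where "N = (\<Sum>p\<leftarrow>qs. fst p)"
  define c where "c = max (-1/2) (e * s)"
  have "0 < K" unfolding K_def using abs_ge_zero[of "f x1 - f x0"] by linarith
  then have "0 < e" unfolding e_def by simp
  have e_small: "e * (f x1 - f x0) \<le> 1 / 2"
  proof -
    have "e * (f x1 - f x0) \<le> e * K"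
      unfolding K_def using \<open>0 < e\<close> by (intro mult_left_mono) auto
    also have "\<dots> = 1 / 2"
      unfolding e_def using \<open>0 < K\<close> by simp
    finally show ?thesis .
  qed
  have qs: "\<forall>p\<in>set qs. 0 \<le> fst p" using ps \<open>0 < e\<close> by (simp add: qs_def)
  have "0 \<le> (\<Sum>p\<leftarrow>ps. fst p)" using ps by (induction ps) auto
  then have "0 < N" using \<open>0 < e\<close> by (simp add: N_def qs_def)
  have "c < 0" unfolding c_def using \<open>0 < e\<close> \<open>s < 0\<close> by (simp add: mult_pos_neg)
  have "(\<Sum>p\<leftarrow>qs. fst p * ?g i (snd p)) \<le> c" for i
  proof (cases i)
    case None
    then show ?thesis
      using objective e_small unfolding qs_def c_def by simp
  next
    case (Some l)
    have "e * fl l x1 \<le> e * s" using slater \<open>0 < e\<close> by (simp add: mult_left_mono)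
    then show ?thesis
      using Some constraints[of l] unfolding qs_def c_def by simp
  qed
  then have "(SUP i. ereal ((\<Sum>p\<leftarrow>qs. fst p * ?g i (snd p)) / N)) \<le> ereal (c / N)"
    using \<open>0 < N\<close> by (intro SUP_least) (simp add: divide_right_mono)
  then have "0 \<le> ereal (c / N)"
    using nonneg infsup_convex_weighted[OF convex qs \<open>0 < N\<close>[unfolded N_def]]
    unfolding N_def by (meson order_trans)
  moreover have "c / N < 0" using \<open>c < 0\<close> \<open>0 < N\<close> by (simp add: divide_neg_pos)
  ultimately show False by simp
qed

lemma multiplier_if_infsup_convex:
  assumes bounded: "\<And>x. (\<lambda>l. fl l x) \<in> linf"
    and convex: "infsup_convex (augmented_family f fl x0)"
    and nonneg: "0 \<le> (INF x. SUP i. ereal (augmented_family f fl x0 i x))"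
    and x1: "\<And>l. fl l x1 \<le> s" and "s < 0"
  obtains \<Phi> where "\<Phi> \<in> pos_dual" "\<And>x. f x0 \<le> f x + \<Phi> (\<lambda>l. fl l x)"
proof -
  let ?E = "dominated_cone fl (\<lambda>x. f x - f x0)"
  have finite: "\<exists>r. (\<phi>, r) \<in> ?E" if "\<phi> \<in> linf" for \<phi>
    using ex_dominated_cone_if_slater[where fl = fl, OF that x1 \<open>s < 0\<close>] .
  have zero: "(\<lambda>_. 0, 0) \<in> ?E"
    by (rule dominated_coneI[where ps = "[]"]) auto
  note avoids = dominated_cone_avoids[OF convex nonneg x1 \<open>s < 0\<close>]
  obtain L
    where add: "\<And>\<phi> \<psi>. \<phi> \<in> linf \<Longrightarrow> \<psi> \<in> linf \<Longrightarrow> L (\<lambda>l. \<phi> l + \<psi> l) = L \<phi> + L \<psi>"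
      and scale: "\<And>\<phi> c. \<phi> \<in> linf \<Longrightarrow> L (\<lambda>l. c * \<phi> l) = c * L \<phi>"
      and below: "\<And>\<phi> r. (\<phi>, r) \<in> ?E \<Longrightarrow> \<phi> \<in> linf \<Longrightarrow> L \<phi> \<le> r"
    using linear_functional_below_conic[OF linf_add linf_scale conic_dominated_cone avoids zero finite]
    by blast
  have minus: "L (\<lambda>l. - \<phi> l) = - L \<phi>" if "\<phi> \<in> linf" for \<phi>
    using scale[OF that, of "-1"] by simp
  have "0 \<le> L \<phi>" if "\<phi> \<in> linf" "\<And>l. 0 \<le> \<phi> l" for \<phi>
  proof -
    have "(\<lambda>l. - \<phi> l, 0) \<in> ?E"
      using that by (intro dominated_coneI[where ps = "[]"]) auto
    then have "L (\<lambda>l. - \<phi> l) \<le> 0" using below linf_minus[OF that(1)] by blast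
    then show ?thesis using minus[OF that(1)] by simp
  qed
  then have "L \<in> pos_dual"
    using add scale by (intro pos_dual_if_positive_linear) auto
  moreover have "f x0 \<le> f x + L (\<lambda>l. fl l x)" for x
  proof -
    have "(\<lambda>l. - fl l x, f x - f x0) \<in> ?E"
      by (intro dominated_coneI[where ps = "[(1, x)]"]) auto
    then have "L (\<lambda>l. - fl l x) \<le> f x - f x0" using below linf_minus[OF bounded] by blast
    then show ?thesis using minus[OF bounded] by simp
  qed
  ultimately show ?thesis by (rule that)
qed

theorem theorem4p2:
  fixes f :: "'x \<Rightarrow> real" and fl :: "'l \<Rightarrow> 'x \<Rightarrow> real"
    and x0 :: 'x
  defines "X0 \<equiv> {x. (SUP l. fl l x) \<le> 0}"
  assumes bounded: "\<And>x. (\<lambda>l. fl l x) \<in> linf"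
    and feasible: "x0 \<in> X0"
    and optimal: "ereal (f x0) = (INF x\<in>X0. ereal (f x))"
    and slater: "\<exists>x1. (SUP l. fl l x1) < 0"
  shows "(\<exists>\<Phi>0\<in>pos_dual. saddle_point f fl x0 \<Phi>0) \<longleftrightarrow>
         infsup_convex (augmented_family f fl x0)"
proof -
  have x0_feasible: "fl l x0 \<le> 0" for l
    using feasible linf_le_SUP[OF bounded, of l x0] unfolding X0_def by simp
  have x0_optimal: "f x0 \<le> f x" if "(SUP l. fl l x) \<le> 0" for x
  proof -
    have "ereal (f x0) \<le> ereal (f x)"
      unfolding optimal using that by (intro INF_lower) (simp add: X0_def)
    then show ?thesis by simp
  qed
  obtain x1 where x1_slater: "(SUP l. fl l x1) < 0" using slater by blast
  have x1_bound: "fl l x1 \<le> (SUP l. fl l x1)" for l using linf_le_SUP[OF bounded] .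
  have nonneg: "0 \<le> (INF x. SUP i. ereal (augmented_family f fl x0 i x))"
    using bounded x0_optimal by (rule INF_SUP_augmented_family_nonneg)
  show ?thesis
  proof
    assume "\<exists>\<Phi>0\<in>pos_dual. saddle_point f fl x0 \<Phi>0"
    then obtain \<Phi>0 where "\<Phi>0 \<in> pos_dual" "saddle_point f fl x0 \<Phi>0" ..
    then show "infsup_convex (augmented_family f fl x0)"
      using saddle_point_iff[where fl = fl, OF _ bounded x0_feasible]
        infsup_convex_if_multiplier[where fl = fl, OF _ bounded x0_feasible] by blast
  next
    assume convex: "infsup_convex (augmented_family f fl x0)"
    obtain \<Phi>0 where "\<Phi>0 \<in> pos_dual" "\<And>x. f x0 \<le> f x + \<Phi>0 (\<lambda>l. fl l x)"
      using multiplier_if_infsup_convex[where fl = fl, OF bounded convex nonneg x1_bound x1_slater]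
      by blast
    then show "\<exists>\<Phi>0\<in>pos_dual. saddle_point f fl x0 \<Phi>0"
      using saddle_point_iff[where fl = fl, OF _ bounded x0_feasible] by blast
  qed
qed

end
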